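(* Fix an integer $k\geq1$ and $V=\{0,\ldots,k\}$. If a Boolean function $\varphi$ on $V$ is fragmentable, then $\mathrm{eul}(\varphi)=0$.
   Context: A valuation is a subset $\nu\subseteq V$; $\nu^{(l)}$ is $\nu$ with membership of $l$ flipped. A Boolean function on $V$ is a map $\varphi:2^V\to\{\text{false},\text{true}\}$; $\mathrm{eul}(\varphi)=\sum_{\nu:\varphi(\nu)=\text{true}}(-1)^{|\nu|}$. $\varphi$ is degenerate if there is $l\in V$ with $\varphi(\nu)=\varphi(\nu^{(l)})$ for all $\nu$. Two functions are disjoint if no valuation satisfies both. A $\neg$-$\vee$-template is a Boolean circuit all of whose internal gates are $\neg$- or $\vee$-gates (a single leaf is allowed); its leaves $l_0,\ldots,l_n$ are holes. $T[\varphi_0,\ldots,\varphi_n]$ is the function obtained by substituting $\varphi_i$ for $l_i$; it is deterministic if, for every $\vee$-gate of the template, any two distinct inputs compute disjoint functions. $\varphi$ is fragmentable if there exist a $\neg$-$\vee$-template $T$ and degenerate functions $\varphi_0,\ldots,\varphi_n$ (one per hole) such that $T[\varphi_0,\ldots,\varphi_n]$ is deterministic and equivalent to $\varphi$. *)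

theory Defs
  imports Main
begin

type_synonym valuation = "nat set"
type_synonym boolfun = "nat set \<Rightarrow> bool"

definition flip :: "nat set \<Rightarrow> nat \<Rightarrow> nat set" where
  "flip \<nu> l = (if l \<in> \<nu> then \<nu> - {l} else insert l \<nu>)"

definition eul :: "nat set \<Rightarrow> boolfun \<Rightarrow> int" where
  "eul V \<phi> = (\<Sum>\<nu> \<in> {\<nu>. \<nu> \<subseteq> V \<and> \<phi> \<nu>}. (-1) ^ card \<nu>)"

definition degenerate :: "nat set \<Rightarrow> boolfun \<Rightarrow> bool" where
  "degenerate V \<phi> \<longleftrightarrow> (\<exists>l \<in> V. \<forall>\<nu>. \<nu> \<subseteq> V \<longrightarrow> \<phi> \<nu> = \<phi> (flip \<nu> l))"

definition disjoint_fun :: "nat set \<Rightarrow> boolfun \<Rightarrow> boolfun \<Rightarrow> bool" where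
  "disjoint_fun V \<phi> \<psi> \<longleftrightarrow> (\<forall>\<nu>. \<nu> \<subseteq> V \<longrightarrow> \<not> (\<phi> \<nu> \<and> \<psi> \<nu>))"

definition equiv_fun :: "nat set \<Rightarrow> boolfun \<Rightarrow> boolfun \<Rightarrow> bool" where
  "equiv_fun V \<phi> \<psi> \<longleftrightarrow> (\<forall>\<nu>. \<nu> \<subseteq> V \<longrightarrow> \<phi> \<nu> = \<psi> \<nu>)"

text \<open>Negation-disjunction templates (circuits unfolded into formula trees);
  holes are leaves labelled by an index; Or gates have arbitrary fan-in.\<close>
datatype template = Hole nat | Neg template | Or "template list"

fun subst :: "template \<Rightarrow> (nat \<Rightarrow> boolfun) \<Rightarrow> boolfun" where
  "subst (Hole i) \<Phi> = \<Phi> i"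
| "subst (Neg T) \<Phi> = (\<lambda>\<nu>. \<not> subst T \<Phi> \<nu>)"
| "subst (Or Ts) \<Phi> = (\<lambda>\<nu>. \<exists>T \<in> set Ts. subst T \<Phi> \<nu>)"

fun holes :: "template \<Rightarrow> nat set" where
  "holes (Hole i) = {i}"
| "holes (Neg T) = holes T"
| "holes (Or Ts) = (\<Union>T \<in> set Ts. holes T)"

fun deterministic :: "nat set \<Rightarrow> template \<Rightarrow> (nat \<Rightarrow> boolfun) \<Rightarrow> bool" where
  "deterministic V (Hole i) \<Phi> = True"
| "deterministic V (Neg T) \<Phi> = deterministic V T \<Phi>"
| "deterministic V (Or Ts) \<Phi> =
     ((\<forall>T \<in> set Ts. deterministic V T \<Phi>) \<and>
      (\<forall>i < length Ts. \<forall>j < length Ts. i \<noteq> j \<longrightarrow>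
          disjoint_fun V (subst (Ts ! i) \<Phi>) (subst (Ts ! j) \<Phi>)))"

definition fragmentable :: "nat set \<Rightarrow> boolfun \<Rightarrow> bool" where
  "fragmentable V \<phi> \<longleftrightarrow>
     (\<exists>T \<Phi>. (\<forall>i \<in> holes T. degenerate V (\<Phi> i)) \<and>
            deterministic V T \<Phi> \<and> equiv_fun V (subst T \<Phi>) \<phi>)"

end

theory Submission
  imports Defs
begin

text \<open>Flipping the distinguished variable of a degenerate function is a sign-reversing involution
  on its satisfying valuations, so its Euler characteristic vanishes. The Euler characteristic is
  additive over disjoint disjunctions, and \<open>eul V (\<lambda>_. True) = 0\<close> for nonempty \<open>V\<close> gives
  \<open>eul V (\<not> \<phi>) = - eul V \<phi>\<close>.\<close>

lemma flip_subset: "\<nu> \<subseteq> V \<Longrightarrow> l \<in> V \<Longrightarrow> flip \<nu> l \<subseteq> V"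
  by (auto simp: flip_def)

lemma flip_flip [simp]: "flip (flip \<nu> l) l = \<nu>"
  by (auto simp: flip_def)

lemma minus_one_power_card_flip:
  assumes "finite \<nu>"
  shows "(-1::int) ^ card (flip \<nu> l) = - ((-1) ^ card \<nu>)"
proof (cases "l \<in> \<nu>")
  case True
  then have "card \<nu> = Suc (card (\<nu> - {l}))"
    using assms by (metis card_Suc_Diff1)
  then have "(-1::int) ^ card \<nu> = - ((-1) ^ card (\<nu> - {l}))"
    by simp
  then show ?thesis
    using True by (simp add: flip_def)
next
  case False
  then show ?thesis
    using assms by (simp add: flip_def)
qed

lemma eul_cong: "equiv_fun V \<phi> \<psi> \<Longrightarrow> eul V \<phi> = eul V \<psi>"
  unfolding eul_def equiv_fun_def by (rule arg_cong[where f = "sum _"]) auto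

lemma eul_degenerate:
  assumes "finite V" and "degenerate V \<phi>"
  shows "eul V \<phi> = 0"
proof -
  obtain l where "l \<in> V" and invariant: "\<And>\<nu>. \<nu> \<subseteq> V \<Longrightarrow> \<phi> \<nu> = \<phi> (flip \<nu> l)"
    using assms(2) unfolding degenerate_def by blast
  define S where "S = {\<nu>. \<nu> \<subseteq> V \<and> \<phi> \<nu>}"
  have flip_S: "(\<lambda>\<nu>. flip \<nu> l) ` S \<subseteq> S"
    using invariant \<open>l \<in> V\<close> flip_subset unfolding S_def by blast
  have "bij_betw (\<lambda>\<nu>. flip \<nu> l) S S"
    by (rule bij_betw_byWitness[where f' = "\<lambda>\<nu>. flip \<nu> l"]) (use flip_S in auto)
  then have "(\<Sum>\<nu>\<in>S. (-1::int) ^ card \<nu>) = (\<Sum>\<nu>\<in>S. (-1) ^ card (flip \<nu> l))"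
    using sum.reindex_bij_betw[of _ S S "\<lambda>\<nu>. (-1::int) ^ card \<nu>"] by simp
  also have "\<dots> = (\<Sum>\<nu>\<in>S. - ((-1) ^ card \<nu>))"
    using assms(1) by (intro sum.cong) (auto simp: S_def minus_one_power_card_flip finite_subset)
  also have "\<dots> = - (\<Sum>\<nu>\<in>S. (-1) ^ card \<nu>)"
    by (simp add: sum_negf)
  finally show ?thesis
    unfolding eul_def S_def by simp
qed

lemma eul_True:
  assumes "finite V" and "V \<noteq> {}"
  shows "eul V (\<lambda>_. True) = 0"
  using assms by (intro eul_degenerate) (auto simp: degenerate_def)

lemma eul_disj:
  assumes "finite V" and "disjoint_fun V \<phi> \<psi>"
  shows "eul V (\<lambda>\<nu>. \<phi> \<nu> \<or> \<psi> \<nu>) = eul V \<phi> + eul V \<psi>"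
proof -
  have "{\<nu>. \<nu> \<subseteq> V \<and> (\<phi> \<nu> \<or> \<psi> \<nu>)} = {\<nu>. \<nu> \<subseteq> V \<and> \<phi> \<nu>} \<union> {\<nu>. \<nu> \<subseteq> V \<and> \<psi> \<nu>}"
    by auto
  moreover have "{\<nu>. \<nu> \<subseteq> V \<and> \<phi> \<nu>} \<inter> {\<nu>. \<nu> \<subseteq> V \<and> \<psi> \<nu>} = {}"
    using assms(2) unfolding disjoint_fun_def by auto
  ultimately show ?thesis
    using assms(1) unfolding eul_def by (simp add: sum.union_disjoint)
qed

lemma eul_not:
  assumes "finite V" and "V \<noteq> {}"
  shows "eul V (\<lambda>\<nu>. \<not> \<phi> \<nu>) = - eul V \<phi>"
proof -
  have "eul V (\<lambda>\<nu>. \<phi> \<nu> \<or> \<not> \<phi> \<nu>) = eul V \<phi> + eul V (\<lambda>\<nu>. \<not> \<phi> \<nu>)"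
    using assms(1) by (intro eul_disj) (auto simp: disjoint_fun_def)
  then show ?thesis
    using eul_True[OF assms] by simp
qed

lemma disjoint_fun_sym: "disjoint_fun V \<phi> \<psi> \<longleftrightarrow> disjoint_fun V \<psi> \<phi>"
  unfolding disjoint_fun_def by blast

lemma deterministic_Or_Cons:
  "deterministic V (Or (T # Ts)) \<Phi> \<longleftrightarrow>
     deterministic V T \<Phi> \<and> deterministic V (Or Ts) \<Phi> \<and>
     disjoint_fun V (subst T \<Phi>) (subst (Or Ts) \<Phi>)"
proof -
  have "disjoint_fun V (subst T \<Phi>) (subst (Or Ts) \<Phi>) \<longleftrightarrow>
      (\<forall>j < length Ts. disjoint_fun V (subst T \<Phi>) (subst (Ts ! j) \<Phi>))"
    unfolding disjoint_fun_def by (auto simp: in_set_conv_nth) (use nth_mem in blast)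
  then show ?thesis
    by (auto simp: All_less_Suc2 disjoint_fun_sym[of V "subst T \<Phi>"])
qed

lemma eul_subst_deterministic:
  assumes "finite V" and "V \<noteq> {}"
  shows "\<forall>i \<in> holes T. degenerate V (\<Phi> i) \<Longrightarrow> deterministic V T \<Phi> \<Longrightarrow>
    eul V (subst T \<Phi>) = 0"
proof (induction T)
  case (Hole i)
  then show ?case
    using eul_degenerate[OF assms(1)] by simp
next
  case (Neg T)
  then show ?case
    using eul_not[OF assms] by simp
next
  case (Or Ts)
  then show ?case
  proof (induction Ts)
    case Nil
    then show ?case
      by (simp add: eul_def)
  next
    case (Cons T Ts)
    have "deterministic V T \<Phi>" and "deterministic V (Or Ts) \<Phi>"
      and disjoint: "disjoint_fun V (subst T \<Phi>) (subst (Or Ts) \<Phi>)"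
      using Cons.prems(3) deterministic_Or_Cons by blast+
    then have "eul V (subst T \<Phi>) = 0" and "eul V (subst (Or Ts) \<Phi>) = 0"
      using Cons by simp_all
    moreover have "subst (Or (T # Ts)) \<Phi> = (\<lambda>\<nu>. subst T \<Phi> \<nu> \<or> subst (Or Ts) \<Phi> \<nu>)"
      by auto
    ultimately show ?case
      using eul_disj[OF assms(1) disjoint] by simp
  qed
qed

theorem proposition4p6:
  fixes k :: nat and \<phi> :: boolfun
  assumes "k \<ge> 1"
    and "fragmentable {0..k} \<phi>"
  shows "eul {0..k} \<phi> = 0"
proof -
  obtain T \<Phi> where "\<forall>i \<in> holes T. degenerate {0..k} (\<Phi> i)"
    and "deterministic {0..k} T \<Phi>" and "equiv_fun {0..k} (subst T \<Phi>) \<phi>"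
    using assms(2) unfolding fragmentable_def by blast
  moreover have "finite {0..k}" and "{0..k} \<noteq> {}"
    by auto
  ultimately show ?thesis
    using eul_subst_deterministic eul_cong by metis
qed

end
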